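(* Let $\mathcal{A}=\{e_1,\dots,e_d\}$ be the standard basis of $\mathbb{R}^d$, $\pi_{\mathrm{off}}\in\Delta(\mathcal{A})$, $\mathcal{A}_l\subseteq\mathcal{A}$ nonempty with $\pi_{\mathrm{off}}(a)>0$ for all $a\in\mathcal{A}_l$, and $\alpha\in[0,1)$. Let $0<\pi_{(1)}<\pi_{(2)}<\dots<\pi_{(r)}\le1$ be the distinct values of $\pi_{\mathrm{off}}(a)$, $a\in\mathcal{A}_l$, the value $\pi_{(i)}$ being taken $m_i$ times. Define $\beta_1=1$, $\beta_i=\big(1+\sum_{j=1}^{i-1}m_j(\pi_{(i)}-\pi_{(j)})\big)^{-1}$ for $1<i\le r$, and $\beta_{r+1}=0$. Then there is $i\in[r]$ with $\beta_{i+1}\le\alpha<\beta_i$, and for this $i$, with $\pi^*\in\arg\max_{\pi\in\Delta(\mathcal{A}_l)}\log\det\big(V_{(1-\alpha)\pi+\alpha\pi_{\mathrm{off}}}\big)$ and $\tilde\pi^\star=(1-\alpha)\pi^*+\alpha\pi_{\mathrm{off}}$, $$g_{\mathcal{A}_l}(\tilde\pi^\star)=\frac{\sum_{j=1}^im_j}{\alpha\sum_{j=1}^im_j\pi_{(j)}+1-\alpha}.$$ Further, the support of $\pi^*$ is $S_i=\{a\in\mathcal{A}_l:\pi_{\mathrm{off}}(a)\le\pi_{(i)}\}$ and for $a\in S_i$, $$\pi^*(a)=\frac1{|S_i|}+\frac{\alpha}{1-\alpha}\Big[\frac{\pi_{\mathrm{off}}(S_i)}{|S_i|}-\pi_{\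mathrm{off}}(a)\Big].$$
   Context: $\Delta(\mathcal{B})$ is the probability simplex over $\mathcal{B}$; $V_\pi=\sum_a\pi(a)aa^\top$; $g_{\mathcal{B}}(\pi)=\max_{a\in\mathcal{B}}a^\top V_\pi^{-1}a$; $\pi_{\mathrm{off}}(S)=\sum_{a\in S}\pi_{\mathrm{off}}(a)$. *)

theory Defs
  imports "HOL-Analysis.Analysis"
begin

text \<open>Vectors of R^d are \<open>real^'n\<close> (d = CARD('n)).  Distributions over a finite
set B of vectors are functions \<open>real^'n \<Rightarrow> real\<close> vanishing outside B.\<close>

definition outer :: "real^'n \<Rightarrow> real^'n^'n" where
  "outer a = (\<chi> i j. a$i * a$j)"

definition std_basis :: "(real^'n) set" where
  "std_basis = range (\<lambda>k. axis k 1)"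

definition prob_simplex :: "(real^'n) set \<Rightarrow> (real^'n \<Rightarrow> real) set" where
  "prob_simplex B = {q. (\<forall>a. 0 \<le> q a) \<and> (\<forall>a. a \<notin> B \<longrightarrow> q a = 0) \<and> sum q B = 1}"

definition design_matrix :: "(real^'n) set \<Rightarrow> (real^'n \<Rightarrow> real) \<Rightarrow> real^'n^'n" where
  "design_matrix B q = (\<Sum>a\<in>B. q a *\<^sub>R outer a)"

text \<open>This is how V is
  restricted to span A_l (V may be singular on coordinates outside A_l).\<close>
definition proj_span :: "(real^'n) set \<Rightarrow> real^'n^'n" where
  "proj_span B = (\<Sum>b\<in>B. outer b)"

definition compress :: "(real^'n) set \<Rightarrow> real^'n^'n \<Rightarrow> real^'n^'n" where
  "compress B M = proj_span B ** M ** proj_span B + (mat 1 - proj_span B)"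

definition logdet_on :: "(real^'n) set \<Rightarrow> real^'n^'n \<Rightarrow> ereal" where
  "logdet_on B M = (if det (compress B M) > 0 then ereal (ln (det (compress B M))) else -\<infinity>)"

definition g_on :: "(real^'n) set \<Rightarrow> real^'n^'n \<Rightarrow> real" where
  "g_on B M = Max ((\<lambda>a. a \<bullet> (matrix_inv (compress B M) *v a)) ` B)"

definition mix :: "real \<Rightarrow> (real^'n \<Rightarrow> real) \<Rightarrow> (real^'n \<Rightarrow> real) \<Rightarrow> (real^'n \<Rightarrow> real)" where
  "mix \<alpha> q p = (\<lambda>a. (1 - \<alpha>) * q a + \<alpha> * p a)"

definition nvals :: "(real^'n \<Rightarrow> real) \<Rightarrow> (real^'n) set \<Rightarrow> nat" where
  "nvals p Al = card (p ` Al)"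

definition ord_val :: "(real^'n \<Rightarrow> real) \<Rightarrow> (real^'n) set \<Rightarrow> nat \<Rightarrow> real" where
  "ord_val p Al i = sorted_list_of_set (p ` Al) ! (i - 1)"

definition mult :: "(real^'n \<Rightarrow> real) \<Rightarrow> (real^'n) set \<Rightarrow> nat \<Rightarrow> nat" where
  "mult p Al i = card {a\<in>Al. p a = ord_val p Al i}"

definition beta :: "(real^'n \<Rightarrow> real) \<Rightarrow> (real^'n) set \<Rightarrow> nat \<Rightarrow> real" where
  "beta p Al i =
     (if i = 1 then 1
      else if i = nvals p Al + 1 then 0
      else inverse (1 + (\<Sum>j=1..i-1. real (mult p Al j) * (ord_val p Al i - ord_val p Al j))))"

end

theory Submission
  imports Defs
begin

text \<open>
  For arms on the standard basis all matrices involved are diagonal: the log-determinant of the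
  compressed design matrix of w = (1 - alpha) q + alpha p is the sum of ln w(a) over A_l, and g
  is the largest reciprocal 1 / w(a).  Maximising this strictly concave function over the simplex
  is a water-filling problem.  For S a subset of A_l put c = (1 - alpha + alpha p(S)) / |S| and
  choose q with w = c on S and q = 0 off S.  This q is a distribution when alpha p(a) < c on S;
  if moreover c <= alpha p(a) off S, the first-order condition holds, and the tangent bound
  ln x - ln y <= (x - y) / y makes q the unique maximiser.  Since
  beta_i = 1 / (1 + sum over a in S_i of (pi_(i) - p(a))), the bracket beta_(i+1) <= alpha < beta_i
  says precisely that alpha pi_(i) lies below the level c of S_i and alpha pi_(i+1) above it.
  So S = S_i, and g = 1 / c.
\<close>

definition diag_mat :: "('n::finite \<Rightarrow> 'a::zero) \<Rightarrow> 'a^'n^'n" where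
  "diag_mat d = (\<chi> i j. if i = j then d i else 0)"

lemma sum_delta_mult: "(\<Sum>k\<in>UNIV. (if i = k then c else 0) * f k) = c * f (i::'n::finite)"
  for c :: "'a::semiring_1"
  by (simp add: if_distrib if_distribR sum.delta cong del: if_weak_cong)

lemma diag_mat_mult: "diag_mat d ** diag_mat e = diag_mat (\<lambda>i. d i * e i :: 'a::semiring_1)"
  unfolding diag_mat_def matrix_matrix_mult_def by (simp add: vec_eq_iff sum_delta_mult)

lemma diag_mat_add: "diag_mat d + diag_mat e = diag_mat (\<lambda>i. d i + e i :: 'a::monoid_add)"
  by (simp add: diag_mat_def vec_eq_iff)

lemma diag_mat_diff: "diag_mat d - diag_mat e = diag_mat (\<lambda>i. d i - e i :: 'a::group_add)"
  by (simp add: diag_mat_def vec_eq_iff)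

lemma mat_eq_diag_mat: "mat c = diag_mat (\<lambda>_. c)"
  by (simp add: diag_mat_def mat_def vec_eq_iff)

lemma sum_diag_mat:
  "(\<Sum>k\<in>K. diag_mat (d k)) = diag_mat (\<lambda>i. \<Sum>k\<in>K. d k i :: 'a::comm_monoid_add)"
  by (induction K rule: infinite_finite_induct) (simp_all add: diag_mat_def vec_eq_iff)

lemma det_diag_mat: "det (diag_mat d) = prod d (UNIV :: 'n::finite set)"
  by (subst det_diagonal) (auto simp: diag_mat_def)

lemma diag_mat_mult_vec: "diag_mat d *v x = ((\<chi> i. d i * x $ i) :: 'a::semiring_1^'n)"
  unfolding diag_mat_def matrix_vector_mult_def by (simp add: vec_eq_iff sum_delta_mult)

lemma matrix_inv_eqI:
  fixes A B :: "'a::semiring_1^'n^'n"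
  assumes "A ** B = mat 1" "B ** A = mat 1"
  shows "matrix_inv A = B"
proof -
  let ?C = "matrix_inv A"
  have C: "A ** ?C = mat 1 \<and> ?C ** A = mat 1"
    unfolding matrix_inv_def by (rule someI[of _ B]) (use assms in blast)
  have "?C = ?C ** (A ** B)" using assms by simp
  also have "\<dots> = B" using C by (simp add: matrix_mul_assoc)
  finally show ?thesis .
qed

lemma matrix_inv_diag_mat:
  assumes "\<And>i. d i \<noteq> 0"
  shows "matrix_inv (diag_mat d) = diag_mat (\<lambda>i. inverse (d i :: 'a::field))"
  by (rule matrix_inv_eqI) (simp_all add: diag_mat_mult mat_eq_diag_mat assms)

lemma scaleR_outer_axis: "c *\<^sub>R outer (axis k 1) = diag_mat (\<lambda>i. if i = k then c else 0)"
  by (simp add: outer_def diag_mat_def axis_def vec_eq_iff)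

lemma axis_image_std_basis_subset:
  "B \<subseteq> std_basis \<Longrightarrow> (\<lambda>k. axis k 1) ` {k. axis k 1 \<in> B} = B"
  unfolding std_basis_def by auto

lemma inj_on_axis_1: "inj_on (\<lambda>k. axis k (1::real)) K"
  by (auto simp: inj_on_def axis_eq_axis)

lemma sum_std_basis_subset:
  assumes "B \<subseteq> std_basis"
  shows "(\<Sum>b\<in>B. f b) = (\<Sum>k | axis k 1 \<in> B. f (axis k 1))"
  using sum.reindex[OF inj_on_axis_1, of f "{k. axis k 1 \<in> B}"]
  by (simp add: axis_image_std_basis_subset[OF assms])

lemma prod_std_basis_subset:
  assumes "B \<subseteq> std_basis"
  shows "(\<Prod>b\<in>B. f b) = (\<Prod>k | axis k 1 \<in> B. f (axis k 1))"
  using prod.reindex[OF inj_on_axis_1, of f "{k. axis k 1 \<in> B}"]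
  by (simp add: axis_image_std_basis_subset[OF assms])

lemma sum_outer_std_basis:
  assumes "B \<subseteq> std_basis"
  shows "(\<Sum>b\<in>B. f b *\<^sub>R outer b) = diag_mat (\<lambda>i. if axis i 1 \<in> B then f (axis i 1) else 0)"
proof -
  have "(\<Sum>b\<in>B. f b *\<^sub>R outer b)
      = (\<Sum>k | axis k 1 \<in> B. diag_mat (\<lambda>i. if i = k then f (axis k 1) else 0))"
    by (simp add: sum_std_basis_subset[OF assms] scaleR_outer_axis)
  also have "\<dots> = diag_mat (\<lambda>i. if axis i 1 \<in> B then f (axis i 1) else 0)"
    by (simp add: sum_diag_mat sum.delta)
  finally show ?thesis .
qed

lemma design_matrix_std_basis: "design_matrix std_basis f = diag_mat (\<lambda>i. f (axis i 1))"
  unfolding design_matrix_def by (simp add: sum_outer_std_basis) (simp add: std_basis_def)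

lemma proj_span_std_basis:
  "B \<subseteq> std_basis \<Longrightarrow> proj_span B = diag_mat (\<lambda>i. if axis i 1 \<in> B then 1 else 0)"
  unfolding proj_span_def using sum_outer_std_basis[of B "\<lambda>_. 1"] by simp

lemma compress_design_matrix_std_basis:
  assumes "B \<subseteq> std_basis"
  shows "compress B (design_matrix std_basis f)
           = diag_mat (\<lambda>i. if axis i 1 \<in> B then f (axis i 1) else 1)"
  unfolding compress_def design_matrix_std_basis proj_span_std_basis[OF assms] mat_eq_diag_mat
    diag_mat_mult diag_mat_diff diag_mat_add
  by (rule arg_cong[where f = diag_mat]) auto

lemma det_compress_design_matrix_std_basis:
  assumes "B \<subseteq> std_basis"
  shows "det (compress B (design_matrix std_basis f)) = prod f B"
  unfolding compress_design_matrix_std_basis[OF assms] det_diag_mat prod_std_basis_subset[OF assms]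
  by (simp add: prod.If_cases Int_def)

lemma logdet_on_design_matrix_std_basis:
  "B \<subseteq> std_basis \<Longrightarrow> logdet_on B (design_matrix std_basis f)
     = (if 0 < prod f B then ereal (ln (prod f B)) else -\<infinity>)"
  by (simp add: logdet_on_def det_compress_design_matrix_std_basis)

lemma g_on_design_matrix_std_basis:
  assumes "B \<subseteq> std_basis" and "\<forall>a\<in>B. f a \<noteq> 0"
  shows "g_on B (design_matrix std_basis f) = Max ((\<lambda>a. inverse (f a)) ` B)"
proof -
  let ?d = "\<lambda>i. if axis i 1 \<in> B then f (axis i 1) else 1"
  have "matrix_inv (compress B (design_matrix std_basis f)) = diag_mat (\<lambda>i. inverse (?d i))"
    unfolding compress_design_matrix_std_basis[OF assms(1)]
    by (rule matrix_inv_diag_mat) (use assms(2) in auto)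
  moreover have "a \<bullet> (diag_mat (\<lambda>i. inverse (?d i)) *v a) = inverse (f a)" if "a \<in> B" for a
    using that assms(1) by (auto simp: std_basis_def diag_mat_mult_vec inner_axis')
  ultimately show ?thesis
    unfolding g_on_def by (metis (no_types, lifting) image_cong)
qed

lemma ord_val_less:
  assumes "1 \<le> j" "j < k" "k \<le> nvals p Al"
  shows "ord_val p Al j < ord_val p Al k"
  unfolding ord_val_def using assms
  by (intro sorted_wrt_nth_less[OF strict_sorted_list_of_set]) (auto simp: nvals_def)

lemma ord_val_le_iff:
  assumes "j \<in> {1..nvals p Al}" "k \<in> {1..nvals p Al}"
  shows "ord_val p Al j \<le> ord_val p Al k \<longleftrightarrow> j \<le> k"
  using ord_val_less[of j k p Al] ord_val_less[of k j p Al] assms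
  by (cases j k rule: linorder_cases) auto

lemma ord_val_eq_iff:
  assumes "j \<in> {1..nvals p Al}" "k \<in> {1..nvals p Al}"
  shows "ord_val p Al j = ord_val p Al k \<longleftrightarrow> j = k"
  using ord_val_le_iff[OF assms] ord_val_le_iff[OF assms(2,1)] by (metis order.antisym order.refl)

lemma ord_val_image:
  assumes "finite Al"
  shows "ord_val p Al ` {1..nvals p Al} = p ` Al"
proof
  show "ord_val p Al ` {1..nvals p Al} \<subseteq> p ` Al"
    using assms nth_mem[of _ "sorted_list_of_set (p ` Al)"]
    by (force simp: ord_val_def nvals_def)
  show "p ` Al \<subseteq> ord_val p Al ` {1..nvals p Al}"
  proof
    fix y assume "y \<in> p ` Al"
    then obtain k where "k < nvals p Al" "y = sorted_list_of_set (p ` Al) ! k"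
      using assms by (metis in_set_conv_nth nvals_def length_sorted_list_of_set
          finite_imageI set_sorted_list_of_set)
    then show "y \<in> ord_val p Al ` {1..nvals p Al}"
      by (intro image_eqI[of _ _ "Suc k"]) (auto simp: ord_val_def)
  qed
qed

lemma sublevel_eq_UN_levels:
  assumes "finite Al" "i \<in> {1..nvals p Al}"
  shows "{a\<in>Al. p a \<le> ord_val p Al i} = (\<Union>j\<in>{1..i}. {a\<in>Al. p a = ord_val p Al j})"
proof -
  have "p a \<le> ord_val p Al i \<longleftrightarrow> (\<exists>j\<in>{1..i}. p a = ord_val p Al j)" if "a \<in> Al" for a
  proof -
    obtain k where k: "k \<in> {1..nvals p Al}" "p a = ord_val p Al k"
      using ord_val_image[OF assms(1), of p] \<open>a \<in> Al\<close> by (metis imageE imageI)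
    have "{1..i} \<subseteq> {1..nvals p Al}" using assms(2) by auto
    then have "(\<exists>j\<in>{1..i}. ord_val p Al k = ord_val p Al j) \<longleftrightarrow> k \<in> {1..i}"
      using ord_val_eq_iff[OF k(1)] by blast
    then show ?thesis
      unfolding k(2) ord_val_le_iff[OF k(1) assms(2)] using k(1) by simp
  qed
  then show ?thesis by blast
qed

lemma sum_sublevel:
  fixes g :: "real \<Rightarrow> real"
  assumes "finite Al" "i \<in> {1..nvals p Al}"
  shows "(\<Sum>a\<in>{a\<in>Al. p a \<le> ord_val p Al i}. g (p a))
           = (\<Sum>j=1..i. real (mult p Al j) * g (ord_val p Al j))"
proof -
  have "disjoint_family_on (\<lambda>j. {a\<in>Al. p a = ord_val p Al j}) {1..i}"
    using assms(2) ord_val_eq_iff[of _ p Al] by (fastforce simp: disjoint_family_on_def)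
  then have "(\<Sum>a\<in>{a\<in>Al. p a \<le> ord_val p Al i}. g (p a))
      = (\<Sum>j=1..i. \<Sum>a\<in>{a\<in>Al. p a = ord_val p Al j}. g (p a))"
    unfolding sublevel_eq_UN_levels[OF assms] using assms(1) by (intro sum.UNION_disjoint_family) auto
  also have "\<dots> = (\<Sum>j=1..i. real (mult p Al j) * g (ord_val p Al j))"
    by (simp add: mult_def)
  finally show ?thesis .
qed

lemma beta_eq_sublevel:
  assumes "finite Al" "i \<in> {1..nvals p Al}"
  shows "beta p Al i
           = inverse (1 + (\<Sum>a\<in>{a\<in>Al. p a \<le> ord_val p Al i}. ord_val p Al i - p a))"
proof -
  obtain n where i: "i = Suc n" using assms(2) by (cases i) auto
  have "(\<Sum>j=1..n. real (mult p Al j) * (ord_val p Al i - ord_val p Al j))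
      = (\<Sum>j=1..i. real (mult p Al j) * (ord_val p Al i - ord_val p Al j))"
    unfolding i by (simp add: sum.cl_ivl_Suc)
  also have "\<dots> = (\<Sum>a\<in>{a\<in>Al. p a \<le> ord_val p Al i}. ord_val p Al i - p a)"
    by (rule sum_sublevel[OF assms, symmetric])
  finally show ?thesis
    using assms(2) unfolding beta_def i by (auto simp: nvals_def)
qed

lemma beta_Suc_eq_sublevel:
  assumes "finite Al" "i \<in> {1..<nvals p Al}"
  shows "beta p Al (i + 1)
           = inverse (1 + (\<Sum>a\<in>{a\<in>Al. p a \<le> ord_val p Al i}. ord_val p Al (i + 1) - p a))"
  using assms sum_sublevel[OF assms(1), of i p "\<lambda>y. ord_val p Al (i + 1) - y"]
  by (simp add: beta_def)

lemma beta_bracket_exists: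
  assumes "finite Al" "Al \<noteq> {}" "0 \<le> \<alpha>" "\<alpha> < 1"
  shows "\<exists>i\<in>{1..nvals p Al}. beta p Al (i + 1) \<le> \<alpha> \<and> \<alpha> < beta p Al i"
proof -
  define I where "I = {i\<in>{1..nvals p Al}. \<alpha> < beta p Al i}"
  define i where "i = Max I"
  have r: "1 \<le> nvals p Al"
    using assms(1,2) by (simp add: nvals_def Suc_le_eq card_gt_0_iff)
  then have "1 \<in> I" using assms(4) by (simp add: I_def beta_def)
  moreover have fin: "finite I" by (simp add: I_def)
  ultimately have "i \<in> I" unfolding i_def by (intro Max_in) auto
  moreover have "beta p Al (i + 1) \<le> \<alpha>"
  proof (cases "i < nvals p Al")
    case True
    have "i + 1 \<notin> I" using Max_ge[OF fin, of "i + 1"] by (auto simp: i_def)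
    then show ?thesis using True by (auto simp: I_def)
  next
    case False
    then have "i = nvals p Al" using \<open>i \<in> I\<close> by (simp add: I_def)
    then show ?thesis using assms(3) r by (simp add: beta_def)
  qed
  ultimately show ?thesis by (auto simp: I_def)
qed

definition water_level :: "real \<Rightarrow> (real^'n \<Rightarrow> real) \<Rightarrow> (real^'n) set \<Rightarrow> real" where
  "water_level \<alpha> p S = (1 - \<alpha> + \<alpha> * sum p S) / card S"

definition water_filling :: "real \<Rightarrow> (real^'n \<Rightarrow> real) \<Rightarrow> (real^'n) set \<Rightarrow> real^'n \<Rightarrow> real" where
  "water_filling \<alpha> p S a = (if a \<in> S then (water_level \<alpha> p S - \<alpha> * p a) / (1 - \<alpha>) else 0)"

lemma less_water_level_iff:
  assumes "finite S" "S \<noteq> {}"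
  shows "\<alpha> * x < water_level \<alpha> p S \<longleftrightarrow> \<alpha> * (1 + (\<Sum>a\<in>S. x - p a)) < 1"
  using assms by (simp add: water_level_def sum_subtractf field_simps card_gt_0_iff)

lemma water_level_le_iff:
  assumes "finite S" "S \<noteq> {}"
  shows "water_level \<alpha> p S \<le> \<alpha> * x \<longleftrightarrow> 1 \<le> \<alpha> * (1 + (\<Sum>a\<in>S. x - p a))"
  using assms by (simp add: water_level_def sum_subtractf field_simps card_gt_0_iff)

lemma water_level_separates_sublevel:
  fixes p :: "real^'n \<Rightarrow> real"
  assumes fin: "finite Al" and i: "i \<in> {1..nvals p Al}" and "0 \<le> \<alpha>"
    and below: "\<alpha> < beta p Al i" and above: "beta p Al (i + 1) \<le> \<alpha>"
  defines "S \<equiv> {a\<in>Al. p a \<le> ord_val p Al i}"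
  shows "\<forall>a\<in>S. \<alpha> * p a < water_level \<alpha> p S"
    and "\<forall>a\<in>Al - S. water_level \<alpha> p S \<le> \<alpha> * p a"
proof -
  have S: "finite S" "S \<noteq> {}"
    using fin ord_val_image[OF fin, of p] i by (force simp: S_def)+
  have gap_ge_1: "1 \<le> 1 + (\<Sum>a\<in>S. x - p a)" if "ord_val p Al i \<le> x" for x
    using that by (auto simp: S_def intro: sum_nonneg)
  have "\<alpha> * (1 + (\<Sum>a\<in>S. ord_val p Al i - p a)) < 1"
    using below beta_eq_sublevel[OF fin i] gap_ge_1[of "ord_val p Al i"]
    by (simp add: S_def field_simps)
  then have level_i: "\<alpha> * ord_val p Al i < water_level \<alpha> p S"
    using less_water_level_iff[OF S] by blast
  show "\<forall>a\<in>S. \<alpha> * p a < water_level \<alpha> p S"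
    using level_i \<open>0 \<le> \<alpha>\<close> by (auto simp: S_def intro: le_less_trans mult_left_mono)
  show "\<forall>a\<in>Al - S. water_level \<alpha> p S \<le> \<alpha> * p a"
  proof
    fix a assume a: "a \<in> Al - S"
    obtain k where k: "k \<in> {1..nvals p Al}" "p a = ord_val p Al k"
      using ord_val_image[OF fin, of p] a by (metis DiffD1 imageE imageI)
    then have "i < k" using a ord_val_le_iff[OF k(1) i] by (auto simp: S_def)
    then have i': "i \<in> {1..<nvals p Al}" and next_le: "ord_val p Al (i + 1) \<le> p a"
      using i k ord_val_le_iff[of "i + 1" p Al k] by auto
    have "1 \<le> \<alpha> * (1 + (\<Sum>a\<in>S. ord_val p Al (i + 1) - p a))"
      using above beta_Suc_eq_sublevel[OF fin i'] gap_ge_1[of "ord_val p Al (i + 1)"]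
        ord_val_le_iff[of i p Al "i + 1"] i'
      by (simp add: S_def field_simps)
    then have "water_level \<alpha> p S \<le> \<alpha> * ord_val p Al (i + 1)"
      using water_level_le_iff[OF S] by blast
    also have "\<dots> \<le> \<alpha> * p a" using next_le \<open>0 \<le> \<alpha>\<close> by (rule mult_left_mono)
    finally show "water_level \<alpha> p S \<le> \<alpha> * p a" .
  qed
qed

lemma ln_diff_less:
  fixes x y :: real
  assumes "0 < x" "0 < y" "x \<noteq> y"
  shows "ln x - ln y < (x - y) / y"
proof -
  have "ln (x / y) \<noteq> x / y - 1"
    using ln_eq_minus_one[of "x / y"] assms by auto
  then have "ln (x / y) < x / y - 1"
    using ln_le_minus_one[of "x / y"] assms by simp
  then show ?thesis
    using assms by (simp add: ln_div diff_divide_distrib)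
qed

locale water_filling_threshold =
  fixes Al S :: "(real^'n) set" and p :: "real^'n \<Rightarrow> real" and \<alpha> :: real
  assumes finite_Al: "finite Al" and S_subset: "S \<subseteq> Al" and S_nonempty: "S \<noteq> {}"
    and p_nonneg: "\<forall>a\<in>Al. 0 \<le> p a" and alpha_nonneg: "0 \<le> \<alpha>" and alpha_less_1: "\<alpha> < 1"
    and below_level: "\<forall>a\<in>S. \<alpha> * p a < water_level \<alpha> p S"
    and above_level: "\<forall>a\<in>Al - S. water_level \<alpha> p S \<le> \<alpha> * p a"
begin

lemma finite_S: "finite S"
  using finite_Al S_subset by (rule finite_subset[rotated])

lemma water_level_pos: "0 < water_level \<alpha> p S"
proof -
  have "0 \<le> sum p S" using p_nonneg S_subset by (auto intro: sum_nonneg)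
  then show ?thesis
    using alpha_nonneg alpha_less_1 finite_S S_nonempty
    by (auto simp: water_level_def card_gt_0_iff intro!: divide_pos_pos add_pos_nonneg)
qed

lemma mix_water_filling:
  "mix \<alpha> (water_filling \<alpha> p S) p a = (if a \<in> S then water_level \<alpha> p S else \<alpha> * p a)"
  using alpha_less_1 by (simp add: mix_def water_filling_def)

lemma mix_water_filling_pos: "a \<in> Al \<Longrightarrow> 0 < mix \<alpha> (water_filling \<alpha> p S) p a"
  using water_level_pos above_level by (force simp: mix_water_filling)

lemma water_filling_support: "{a. water_filling \<alpha> p S a \<noteq> 0} = S"
  using below_level alpha_less_1 by (auto simp: water_filling_def)

lemma water_filling_eq:
  "a \<in> S \<Longrightarrow> water_filling \<alpha> p S a
     = 1 / card S + \<alpha> / (1 - \<alpha>) * (sum p S / card S - p a)"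
  using alpha_less_1 finite_S S_nonempty
  by (simp add: water_filling_def water_level_def field_simps card_gt_0_iff)

lemma sum_water_filling: "sum (water_filling \<alpha> p S) Al = 1"
proof -
  have "sum (water_filling \<alpha> p S) Al = sum (water_filling \<alpha> p S) S"
    using S_subset finite_Al by (intro sum.mono_neutral_right) (auto simp: water_filling_def)
  also have "\<dots> = (card S * water_level \<alpha> p S - \<alpha> * sum p S) / (1 - \<alpha>)"
    by (simp add: water_filling_def sum_divide_distrib[symmetric] sum_subtractf sum_distrib_left)
  also have "\<dots> = 1"
    using alpha_less_1 finite_S S_nonempty by (simp add: water_level_def card_gt_0_iff)
  finally show ?thesis .
qed

lemma water_filling_in_prob_simplex: "water_filling \<alpha> p S \<in> prob_simplex Al"
  using below_level alpha_less_1 S_subset sum_water_filling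
  by (auto simp: prob_simplex_def water_filling_def less_imp_le)

lemma water_filling_first_order:
  assumes q: "q \<in> prob_simplex Al"
  defines "v \<equiv> mix \<alpha> (water_filling \<alpha> p S) p"
  shows "(\<Sum>a\<in>Al. (mix \<alpha> q p a - v a) / v a) \<le> 0"
proof -
  let ?c = "water_level \<alpha> p S"
  have diff: "mix \<alpha> q p a - v a = (1 - \<alpha>) * (q a - water_filling \<alpha> p S a)" for a
    by (simp add: v_def mix_def algebra_simps)
  have "(mix \<alpha> q p a - v a) / v a \<le> (mix \<alpha> q p a - v a) / ?c" if "a \<in> Al" for a
  proof (cases "a \<in> S")
    case True
    then show ?thesis by (simp add: v_def mix_water_filling)
  next
    case False
    have "0 \<le> mix \<alpha> q p a - v a"
      using False q alpha_less_1 by (simp add: diff water_filling_def prob_simplex_def)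
    moreover have "?c \<le> v a"
      using False that above_level by (simp add: v_def mix_water_filling)
    ultimately show ?thesis using water_level_pos by (intro divide_left_mono) auto
  qed
  then have "(\<Sum>a\<in>Al. (mix \<alpha> q p a - v a) / v a) \<le> (\<Sum>a\<in>Al. (mix \<alpha> q p a - v a) / ?c)"
    by (rule sum_mono)
  also have "\<dots> = (1 - \<alpha>) * (sum q Al - sum (water_filling \<alpha> p S) Al) / ?c"
    by (simp add: diff sum_divide_distrib[symmetric] sum_distrib_left[symmetric] sum_subtractf)
  also have "\<dots> = 0"
    using q sum_water_filling by (simp add: prob_simplex_def)
  finally show ?thesis .
qed

lemma water_filling_unique_max:
  assumes q: "q \<in> prob_simplex Al" and pos: "\<forall>a\<in>Al. 0 < mix \<alpha> q p a"
    and ge: "(\<Sum>a\<in>Al. ln (mix \<alpha> (water_filling \<alpha> p S) p a)) \<le> (\<Sum>a\<in>Al. ln (mix \<alpha> q p a))"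
  shows "q = water_filling \<alpha> p S"
proof (rule ccontr)
  let ?w = "mix \<alpha> q p" and ?v = "mix \<alpha> (water_filling \<alpha> p S) p"
  assume "q \<noteq> water_filling \<alpha> p S"
  then obtain b where b_ne: "q b \<noteq> water_filling \<alpha> p S b" by blast
  have "b \<in> Al"
  proof (rule ccontr)
    assume "b \<notin> Al"
    then have "q b = 0" "water_filling \<alpha> p S b = 0"
      using q water_filling_in_prob_simplex by (auto simp: prob_simplex_def)
    with b_ne show False by simp
  qed
  with b_ne have b: "b \<in> Al" "?w b \<noteq> ?v b"
    using alpha_less_1 by (auto simp: mix_def)
  have "(\<Sum>a\<in>Al. ln (?w a) - ln (?v a)) < (\<Sum>a\<in>Al. (?w a - ?v a) / ?v a)"
  proof (rule sum_strict_mono_ex1[OF finite_Al])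
    show "\<forall>a\<in>Al. ln (?w a) - ln (?v a) \<le> (?w a - ?v a) / ?v a"
      using pos mix_water_filling_pos by (simp add: ln_diff_le)
    show "\<exists>a\<in>Al. ln (?w a) - ln (?v a) < (?w a - ?v a) / ?v a"
      using b pos mix_water_filling_pos by (blast intro: ln_diff_less)
  qed
  also have "\<dots> \<le> 0" using water_filling_first_order[OF q] .
  finally show False using ge by (simp add: sum_subtractf)
qed

lemma logdet_maximizer_eq_water_filling:
  assumes std: "Al \<subseteq> std_basis" and qs: "qs \<in> prob_simplex Al"
    and le: "logdet_on Al (design_matrix std_basis (mix \<alpha> (water_filling \<alpha> p S) p))
               \<le> logdet_on Al (design_matrix std_basis (mix \<alpha> qs p))"
  shows "qs = water_filling \<alpha> p S"
proof -
  let ?w = "mix \<alpha> qs p" and ?v = "mix \<alpha> (water_filling \<alpha> p S) p"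
  have "0 < prod ?v Al" using mix_water_filling_pos by (intro prod_pos) auto
  with le have prod_w: "0 < prod ?w Al" and ln_le: "ln (prod ?v Al) \<le> ln (prod ?w Al)"
    by (auto simp: logdet_on_design_matrix_std_basis[OF std] split: if_splits)
  have "0 \<le> ?w a" if "a \<in> Al" for a
    using that qs p_nonneg alpha_nonneg alpha_less_1 by (simp add: mix_def prob_simplex_def)
  moreover have "?w a \<noteq> 0" if "a \<in> Al" for a
    using that prod_w prod_zero[OF finite_Al, of ?w] by force
  ultimately have pos: "\<forall>a\<in>Al. 0 < ?w a" by (simp add: order_le_neq_trans)
  have "ln (prod ?v Al) = (\<Sum>a\<in>Al. ln (?v a))" "ln (prod ?w Al) = (\<Sum>a\<in>Al. ln (?w a))"
    using mix_water_filling_pos pos by (force intro: ln_prod[OF finite_Al])+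
  with ln_le show ?thesis by (intro water_filling_unique_max[OF qs pos]) simp
qed

lemma g_on_water_filling:
  assumes "Al \<subseteq> std_basis"
  shows "g_on Al (design_matrix std_basis (mix \<alpha> (water_filling \<alpha> p S) p))
           = inverse (water_level \<alpha> p S)"
proof -
  let ?v = "mix \<alpha> (water_filling \<alpha> p S) p"
  have "g_on Al (design_matrix std_basis ?v) = Max ((\<lambda>a. inverse (?v a)) ` Al)"
    using mix_water_filling_pos by (intro g_on_design_matrix_std_basis[OF assms]) fastforce
  also have "\<dots> = inverse (water_level \<alpha> p S)"
  proof (rule Max_eqI)
    show "finite ((\<lambda>a. inverse (?v a)) ` Al)" using finite_Al by simp
    show "inverse (water_level \<alpha> p S) \<in> (\<lambda>a. inverse (?v a)) ` Al"
      using S_nonempty S_subset by (force simp: mix_water_filling)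
    show "y \<le> inverse (water_level \<alpha> p S)" if "y \<in> (\<lambda>a. inverse (?v a)) ` Al" for y
      using that above_level water_level_pos
      by (auto simp: mix_water_filling intro: le_imp_inverse_le)
  qed
  finally show ?thesis .
qed

end

theorem proposition4p7:
  fixes p :: "real^'n \<Rightarrow> real" and Al :: "(real^'n) set" and \<alpha> :: real
  assumes "p \<in> prob_simplex std_basis"
    and "Al \<subseteq> std_basis" and "Al \<noteq> {}"
    and "\<forall>a\<in>Al. p a > 0"
    and "0 \<le> \<alpha>" and "\<alpha> < 1"
  shows "\<exists>i\<in>{1..nvals p Al}.
           beta p Al (i + 1) \<le> \<alpha> \<and> \<alpha> < beta p Al i \<and>
           (\<forall>qs. qs \<in> prob_simplex Al \<and>
                 (\<forall>q\<in>prob_simplex Al. logdet_on Al (design_matrix std_basis (mix \<alpha> q p))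
                                  \<le> logdet_on Al (design_matrix std_basis (mix \<alpha> qs p)))
              \<longrightarrow>
              g_on Al (design_matrix std_basis (mix \<alpha> qs p)) =
                (\<Sum>j=1..i. real (mult p Al j)) /
                (\<alpha> * (\<Sum>j=1..i. real (mult p Al j) * ord_val p Al j) + 1 - \<alpha>) \<and>
              {a. qs a \<noteq> 0} = {a\<in>Al. p a \<le> ord_val p Al i} \<and>
              (\<forall>a\<in>{a\<in>Al. p a \<le> ord_val p Al i}.
                 qs a = 1 / real (card {a\<in>Al. p a \<le> ord_val p Al i})
                   + \<alpha> / (1 - \<alpha>) *
                     (sum p {a\<in>Al. p a \<le> ord_val p Al i} / real (card {a\<in>Al. p a \<le> ord_val p Al i})
                      - p a)))"
proof -
  \<comment> \<open>Only the values of p on A_l matter.\<close>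
  have fin: "finite Al" using assms(2) by (rule finite_subset) (simp add: std_basis_def)
  obtain i where i: "i \<in> {1..nvals p Al}"
    and above: "beta p Al (i + 1) \<le> \<alpha>" and below: "\<alpha> < beta p Al i"
    using beta_bracket_exists[OF fin assms(3,5,6)] by blast
  let ?S = "{a\<in>Al. p a \<le> ord_val p Al i}"
  interpret water_filling_threshold Al ?S p \<alpha>
    using water_level_separates_sublevel[OF fin i assms(5) below above] ord_val_image[OF fin, of p] i
      assms(4-6) fin by unfold_locales (force simp: less_imp_le)+
  have card: "real (card ?S) = (\<Sum>j=1..i. real (mult p Al j))"
    using sum_sublevel[OF fin i, of "\<lambda>_. 1"] by simp
  have mass: "sum p ?S = (\<Sum>j=1..i. real (mult p Al j) * ord_val p Al j)"
    using sum_sublevel[OF fin i, of id] by simp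
  show ?thesis
  proof (intro bexI[of _ i] conjI allI impI)
    fix qs assume "qs \<in> prob_simplex Al \<and>
      (\<forall>q\<in>prob_simplex Al. logdet_on Al (design_matrix std_basis (mix \<alpha> q p))
                          \<le> logdet_on Al (design_matrix std_basis (mix \<alpha> qs p)))"
    then have qs: "qs = water_filling \<alpha> p ?S"
      using logdet_maximizer_eq_water_filling[OF assms(2)] water_filling_in_prob_simplex by blast
    show "g_on Al (design_matrix std_basis (mix \<alpha> qs p)) =
      (\<Sum>j=1..i. real (mult p Al j)) / (\<alpha> * (\<Sum>j=1..i. real (mult p Al j) * ord_val p Al j) + 1 - \<alpha>)"
      using g_on_water_filling[OF assms(2)] by (simp add: qs water_level_def card mass algebra_simps)
    show "{a. qs a \<noteq> 0} = ?S" using water_filling_support by (simp add: qs)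
    show "\<forall>a\<in>?S. qs a = 1 / real (card ?S) + \<alpha> / (1 - \<alpha>) * (sum p ?S / real (card ?S) - p a)"
      using water_filling_eq by (simp add: qs)
  qed (use i above below in auto)
qed

end
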